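(* The following two conditions on $P$ are equivalent: (a) there is a measurable set $A\subset\Lambda$ of positive measure such that for every $x_N\in A$ there is a constant $\gamma(x_N)>0$ with $P(\cdot,x_N)\ge\gamma(x_N)\rho^{(N-1)}$ a.e. on $\Lambda^{N-1}$; (b) there is a measurable set $A\subset\Lambda$ of positive measure and a measurable function $\gamma:A\to(0,\infty)$ such that $P(x_1,\dots,x_N)\ge\rho^{(N-1)}(x_1,\dots,x_{N-1})\gamma(x_N)$ for a.e. $(x_1,\dots,x_N)\in\Lambda^{N-1}\times A$.
   Context: $(\Lambda;dx)$ is a complete $\sigma$-finite measure space with non-zero measure $dx$; $d^kx$ denotes the completion of $dx^{\otimes k}$ on $\Lambda^k$, and "a.e." refers to these measures. $N\ge2$ and $P$ is a symmetric probability density on $\Lambda^N$: a nonnegative, measurable, symmetric function with $\int_{\Lambda^N}P\,d^Nx=1$. The marginal density is $\rho^{(N-1)}(x_1,\dots,x_{N-1}):=\int_{\Lambda}P(x_1,\dots,x_{N-1},x_N)\,dx_N$ (defined a.e. on $\Lambda^{N-1}$). *)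

theory Defs
  imports "HOL-Analysis.Analysis" "HOL-Combinatorics.Permutations"
begin

definition powM :: "'a measure \<Rightarrow> nat \<Rightarrow> (nat \<Rightarrow> 'a) measure" where
  "powM M k = completion (PiM {..<k} (\<lambda>_. M))"

text \<open>Marginal density rho^(N-1)(y) = integral of P(y, x_N) dx_N, where the
  point (y, t) of Lambda^N is y(N-1 := t).\<close>
definition marginal :: "'a measure \<Rightarrow> nat \<Rightarrow> ((nat \<Rightarrow> 'a) \<Rightarrow> real) \<Rightarrow> (nat \<Rightarrow> 'a) \<Rightarrow> ennreal" where
  "marginal M N P y = (\<integral>\<^sup>+ t. ennreal (P (y(N - 1 := t))) \<partial>M)"

definition sym_density :: "'a measure \<Rightarrow> nat \<Rightarrow> ((nat \<Rightarrow> 'a) \<Rightarrow> real) \<Rightarrow> bool" where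
  "sym_density M N P \<longleftrightarrow>
     P \<in> borel_measurable (powM M N) \<and>
     (\<forall>x\<in>space (powM M N). 0 \<le> P x) \<and>
     (\<forall>\<sigma> x. \<sigma> permutes {..<N} \<longrightarrow> x \<in> space (powM M N) \<longrightarrow> P (\<lambda>i. x (\<sigma> i)) = P x) \<and>
     (\<integral>\<^sup>+ x. ennreal (P x) \<partial>powM M N) = 1"

end

theory Submission
  imports Defs
begin

text \<open>
  Write a point of \<open>\<Lambda>\<^sup>N\<close> as \<open>y(n := t)\<close> with \<open>y \<in> \<Lambda>\<^sup>n\<close>, \<open>n = N - 1\<close>. Since \<open>\<Lambda>\<^sup>N\<close> is the
  product of \<open>\<Lambda>\<^sup>n\<close> and \<open>\<Lambda>\<close>, Fubini turns a.e. statements on \<open>\<Lambda>\<^sup>N\<close> into "for a.e. \<open>t\<close>,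
  a.e. in \<open>y\<close>" and back (the latter for measurable predicates). Hence (b) gives (a) after
  removing a null set of \<open>t\<close>'s from \<open>A\<close>. Conversely, given (a), put \<open>\<gamma>(t) = 1/(k+1)\<close> for the
  least \<open>k\<close> with \<open>P(\<cdot>, t) \<ge> \<rho>/(k+1)\<close> a.e.; for each \<open>k\<close> the set of such \<open>t\<close> is measurable,
  because the measure of the sections of a measurable subset of a product depends measurably on
  the base point. This requires \<open>P\<close> to be measurable for the uncompleted product, so \<open>P\<close> is first
  replaced by a Borel version; that changes \<open>P\<close> and \<open>\<rho>\<close> only on null sets and preserves both
  conditions.
\<close>

abbreviation prodM :: "'a measure \<Rightarrow> nat \<Rightarrow> (nat \<Rightarrow> 'a) measure" where
  "prodM M n \<equiv> PiM {..<n} (\<lambda>_. M)"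

lemma fun_upd_in_PiE_iff:
  assumes "y \<in> extensional {..<n}"
  shows "y(n := t) \<in> PiE {..<Suc n} A \<longleftrightarrow> y \<in> PiE {..<n} A \<and> t \<in> A n"
proof
  assume upd: "y(n := t) \<in> PiE {..<Suc n} A"
  have "y = y(n := t, n := undefined)"
    by (simp add: fun_upd_idem extensional_arb[OF assms])
  also have "\<dots> \<in> PiE {..<n} A"
    using upd by (intro fun_upd_in_PiE) (simp_all add: lessThan_Suc)
  finally show "y \<in> PiE {..<n} A \<and> t \<in> A n"
    using PiE_mem[OF upd, of n] by simp
next
  assume "y \<in> PiE {..<n} A \<and> t \<in> A n"
  then show "y(n := t) \<in> PiE {..<Suc n} A"
    using PiE_fun_upd[of t A n y "{..<n}"] by (simp add: lessThan_Suc)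
qed

lemma vimage_fun_upd_PiE:
  assumes "\<And>i. i < Suc n \<Longrightarrow> A i \<subseteq> B"
  shows "(\<lambda>(y, t). y(n := t)) -` PiE {..<Suc n} A \<inter> (PiE {..<n} (\<lambda>_. B) \<times> B) = PiE {..<n} A \<times> A n"
proof -
  have "PiE {..<n} A \<subseteq> PiE {..<n} (\<lambda>_. B)"
    using assms by (intro PiE_mono) auto
  then show ?thesis
    using assms[of n] by (auto simp: fun_upd_in_PiE_iff PiE_iff[of _ _ "\<lambda>_. B"])
qed

lemma sigma_finite_prodM:
  assumes "sigma_finite_measure M"
  shows "sigma_finite_measure (prodM M n)"
proof -
  interpret product_sigma_finite "\<lambda>_. M" by (simp add: product_sigma_finite_def assms)
  interpret finite_product_sigma_finite "\<lambda>_. M" "{..<n}" by standard simp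
  show ?thesis by (rule sigma_finite_measure_axioms)
qed

lemma measurable_fun_upd_pair:
  "(\<lambda>(y, t). y(n := t)) \<in> measurable (prodM M n \<Otimes>\<^sub>M M) (prodM M (Suc n))"
  using measurable_add_dim[of n "{..<n}" "\<lambda>_. M"] by (simp add: lessThan_Suc)

lemma distr_fun_upd_pair:
  assumes "sigma_finite_measure M"
  shows "distr (prodM M n \<Otimes>\<^sub>M M) (prodM M (Suc n)) (\<lambda>(y, t). y(n := t)) = prodM M (Suc n)"
proof -
  interpret M: sigma_finite_measure M by fact
  interpret product_sigma_finite "\<lambda>_. M" by (simp add: product_sigma_finite_def assms)
  interpret Pi: finite_product_sigma_finite "\<lambda>_. M" "{..<n}" by standard simp
  show ?thesis
  proof (rule PiM_eqI)
    fix A assume A: "\<And>i. i \<in> {..<Suc n} \<Longrightarrow> A i \<in> sets M"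
    then have "(\<lambda>(y, t). y(n := t)) -` PiE {..<Suc n} A \<inter> space (prodM M n \<Otimes>\<^sub>M M) = PiE {..<n} A \<times> A n"
      unfolding space_pair_measure space_PiM by (intro vimage_fun_upd_PiE) (auto dest: sets.sets_into_space)
    moreover have "emeasure (prodM M n) (PiE {..<n} A) = (\<Prod>i<n. emeasure M (A i))"
      using A by (intro Pi.measure_times) auto
    ultimately show "emeasure (distr (prodM M n \<Otimes>\<^sub>M M) (prodM M (Suc n)) (\<lambda>(y, t). y(n := t))) (PiE {..<Suc n} A)
        = (\<Prod>i<Suc n. emeasure M (A i))"
      using A by (simp add: emeasure_distr[OF measurable_fun_upd_pair] sets_PiM_I_finite M.emeasure_pair_measure_Times)
  qed simp_all
qed

lemma fun_upd_pair_swap_eq: "(\<lambda>(t, y). y(n := t)) = (\<lambda>(y, t). y(n := t)) \<circ> (\<lambda>(t, y). (y, t))"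
  by auto

lemma measurable_fun_upd_pair_swap:
  "(\<lambda>(t, y). y(n := t)) \<in> measurable (M \<Otimes>\<^sub>M prodM M n) (prodM M (Suc n))"
  unfolding fun_upd_pair_swap_eq by (rule measurable_comp[OF measurable_pair_swap' measurable_fun_upd_pair])

lemma distr_fun_upd_pair_swap:
  assumes "sigma_finite_measure M"
  shows "distr (M \<Otimes>\<^sub>M prodM M n) (prodM M (Suc n)) (\<lambda>(t, y). y(n := t)) = prodM M (Suc n)"
proof -
  interpret pair_sigma_finite "prodM M n" M
    by (intro pair_sigma_finite.intro sigma_finite_prodM assms)
  show ?thesis
    unfolding fun_upd_pair_swap_eq
    by (simp add: distr_distr[OF measurable_fun_upd_pair measurable_pair_swap', symmetric]
        distr_pair_swap[symmetric] distr_fun_upd_pair[OF assms])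
qed

lemma AE_PiM_SucD:
  assumes "sigma_finite_measure M" and "AE x in prodM M (Suc n). Q x"
  shows "AE y in prodM M n. AE t in M. Q (y(n := t))"
proof -
  interpret pair_sigma_finite "prodM M n" M
    by (intro pair_sigma_finite.intro sigma_finite_prodM assms(1))
  have "AE x in distr (prodM M n \<Otimes>\<^sub>M M) (prodM M (Suc n)) (\<lambda>(y, t). y(n := t)). Q x"
    unfolding distr_fun_upd_pair[OF assms(1)] by (fact assms(2))
  then have "AE p in prodM M n \<Otimes>\<^sub>M M. Q ((\<lambda>(y, t). y(n := t)) p)"
    by (rule AE_distrD[OF measurable_fun_upd_pair])
  then show ?thesis by (auto dest: AE_pair)
qed

lemma AE_PiM_SucD_swap:
  assumes "sigma_finite_measure M" and "AE x in prodM M (Suc n). Q x"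
  shows "AE t in M. AE y in prodM M n. Q (y(n := t))"
proof -
  interpret pair_sigma_finite M "prodM M n"
    by (intro pair_sigma_finite.intro sigma_finite_prodM assms(1))
  have "AE x in distr (M \<Otimes>\<^sub>M prodM M n) (prodM M (Suc n)) (\<lambda>(t, y). y(n := t)). Q x"
    unfolding distr_fun_upd_pair_swap[OF assms(1)] by (fact assms(2))
  then have "AE p in M \<Otimes>\<^sub>M prodM M n. Q ((\<lambda>(t, y). y(n := t)) p)"
    by (rule AE_distrD[OF measurable_fun_upd_pair_swap])
  then show ?thesis by (auto dest: AE_pair)
qed

lemma AE_PiM_SucI:
  assumes "sigma_finite_measure M" and Q: "Measurable.pred (prodM M (Suc n)) Q"
    and "AE t in M. AE y in prodM M n. Q (y(n := t))"
  shows "AE x in prodM M (Suc n). Q x"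
proof -
  interpret pair_sigma_finite M "prodM M n"
    by (intro pair_sigma_finite.intro sigma_finite_prodM assms(1))
  have "AE p in M \<Otimes>\<^sub>M prodM M n. Q ((\<lambda>(t, y). y(n := t)) p)"
    using measurable_compose[OF measurable_fun_upd_pair_swap Q] assms(3) by (intro AE_pair_measure) (auto simp: pred_def)
  then have "AE x in distr (M \<Otimes>\<^sub>M prodM M n) (prodM M (Suc n)) (\<lambda>(t, y). y(n := t)). Q x"
    using Q by (subst AE_distr_iff[OF measurable_fun_upd_pair_swap]) (auto simp: pred_def)
  then show ?thesis
    unfolding distr_fun_upd_pair_swap[OF assms(1)] .
qed

lemma AE_PiM_Suc_restrict:
  assumes "sigma_finite_measure M" and "AE y in prodM M n. R y"
  shows "AE x in prodM M (Suc n). R (restrict x {..<n})"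
proof -
  obtain Z where Z: "Z \<in> null_sets (prodM M n)" "\<And>y. y \<in> space (prodM M n) - Z \<Longrightarrow> R y"
    using AE_E3[OF assms(2)] by blast
  have restrict: "(\<lambda>x. restrict x {..<n}) \<in> measurable (prodM M (Suc n)) (prodM M n)"
    by (rule measurable_restrict_subset) auto
  have "AE x in prodM M (Suc n). restrict x {..<n} \<notin> Z"
  proof (rule AE_PiM_SucI[OF assms(1)])
    show "Measurable.pred (prodM M (Suc n)) (\<lambda>x. restrict x {..<n} \<notin> Z)"
      using null_setsD2[OF Z(1)] restrict by measurable
    have "AE y in prodM M n. restrict (y(n := t)) {..<n} \<notin> Z" for t
      using AE_space AE_not_in[OF Z(1)] by eventually_elim (simp add: space_PiM)
    then show "AE t in M. AE y in prodM M n. restrict (y(n := t)) {..<n} \<notin> Z"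
      by simp
  qed
  then show ?thesis
    using measurable_space[OF restrict] Z(2) by (auto elim!: AE_mp)
qed

lemma (in pair_sigma_finite) pred_AE_pair:
  assumes "Measurable.pred (M1 \<Otimes>\<^sub>M M2) (\<lambda>p. Q (fst p) (snd p))"
  shows "Measurable.pred M1 (\<lambda>x. AE y in M2. Q x y)"
proof -
  let ?C = "{p \<in> space (M1 \<Otimes>\<^sub>M M2). \<not> Q (fst p) (snd p)}"
  have C: "?C \<in> sets (M1 \<Otimes>\<^sub>M M2)"
    using assms by measurable
  have "(AE y in M2. Q x y) \<longleftrightarrow> emeasure M2 (Pair x -` ?C) = 0" if "x \<in> space M1" for x
    using that by (intro AE_iff_measurable[OF sets_Pair1[OF C]]) (auto simp: space_pair_measure)
  moreover have "Measurable.pred M1 (\<lambda>x. emeasure M2 (Pair x -` ?C) = 0)"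
    using measurable_emeasure_Pair1[OF C] by measurable
  ultimately show ?thesis
    by (subst measurable_cong) auto
qed

lemma (in pair_sigma_finite) measurable_choice_positive_factor:
  fixes f g :: "'a \<Rightarrow> 'b \<Rightarrow> ennreal"
  assumes [measurable]: "(\<lambda>p. f (fst p) (snd p)) \<in> borel_measurable (M1 \<Otimes>\<^sub>M M2)"
    and [measurable]: "(\<lambda>p. g (fst p) (snd p)) \<in> borel_measurable (M1 \<Otimes>\<^sub>M M2)"
    and ex: "\<And>x. x \<in> A \<Longrightarrow> \<exists>c>0. AE y in M2. ennreal c * g x y \<le> f x y"
  shows "\<exists>\<gamma> :: 'a \<Rightarrow> real. \<gamma> \<in> borel_measurable M1 \<and> (\<forall>x. 0 < \<gamma> x) \<and>
           (\<forall>x\<in>A. AE y in M2. ennreal (\<gamma> x) * g x y \<le> f x y)"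
proof -
  define S where "S k x \<longleftrightarrow> (AE y in M2. ennreal (inverse (real (Suc k))) * g x y \<le> f x y)" for k x
  define \<gamma> where "\<gamma> x = inverse (real (Suc (LEAST k. S k x)))" for x
  have [measurable]: "Measurable.pred M1 (S k)" for k
    unfolding S_def by (rule pred_AE_pair) measurable
  have "\<gamma> \<in> borel_measurable M1"
    unfolding \<gamma>_def by measurable
  moreover have "\<forall>x. 0 < \<gamma> x"
    by (simp add: \<gamma>_def)
  moreover have "AE y in M2. ennreal (\<gamma> x) * g x y \<le> f x y" if x: "x \<in> A" for x
  proof -
    obtain c where "0 < c" and c: "AE y in M2. ennreal c * g x y \<le> f x y"
      using ex[OF x] by blast
    then obtain k where "inverse (real (Suc k)) < c"
      using reals_Archimedean by blast
    then have le: "ennreal (inverse (real (Suc k))) * g x y \<le> ennreal c * g x y" for y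
      by (intro mult_right_mono ennreal_leI) auto
    have "S k x"
      unfolding S_def using c by eventually_elim (rule order.trans[OF le])
    then have "S (LEAST k. S k x) x"
      by (rule LeastI)
    then show ?thesis
      by (simp add: S_def \<gamma>_def)
  qed
  ultimately show ?thesis
    by blast
qed

lemma AE_positive_subsetE:
  assumes "A \<in> sets M" "0 < emeasure M A" "AE x in M. Q x"
  obtains B where "B \<in> sets M" "B \<subseteq> A" "0 < emeasure M B" "\<And>x. x \<in> B \<Longrightarrow> Q x"
proof -
  obtain Z where "\<And>x. x \<in> space M - Z \<Longrightarrow> Q x" "Z \<in> null_sets M"
    using AE_E3[OF assms(3)] by blast
  with assms show ?thesis
    by (intro that[of "A - Z"]) (auto simp: emeasure_Diff_null_set dest: sets.sets_into_space)
qed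

text \<open>Conditions (a) and (b), for the uncompleted product measures and \<open>n = N - 1\<close>.\<close>

definition dominates_sectionwise ::
    "'a measure \<Rightarrow> nat \<Rightarrow> ((nat \<Rightarrow> 'a) \<Rightarrow> real) \<Rightarrow> ((nat \<Rightarrow> 'a) \<Rightarrow> ennreal) \<Rightarrow> bool" where
  "dominates_sectionwise M n P \<rho> \<longleftrightarrow>
     (\<exists>A \<in> sets M. emeasure M A > 0 \<and>
        (\<forall>t\<in>A. \<exists>\<gamma>::real. \<gamma> > 0 \<and>
           (AE y in prodM M n. ennreal (P (y(n := t))) \<ge> ennreal \<gamma> * \<rho> y)))"

definition dominates_measurably ::
    "'a measure \<Rightarrow> nat \<Rightarrow> ((nat \<Rightarrow> 'a) \<Rightarrow> real) \<Rightarrow> ((nat \<Rightarrow> 'a) \<Rightarrow> ennreal) \<Rightarrow> bool" where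
  "dominates_measurably M n P \<rho> \<longleftrightarrow>
     (\<exists>A \<in> sets M. emeasure M A > 0 \<and>
        (\<exists>\<gamma> :: 'a \<Rightarrow> real. \<gamma> \<in> borel_measurable (restrict_space M A) \<and> (\<forall>t\<in>A. \<gamma> t > 0) \<and>
           (AE x in prodM M (Suc n). x n \<in> A \<longrightarrow>
              ennreal (P x) \<ge> \<rho> (restrict x {..<n}) * ennreal (\<gamma> (x n)))))"

lemma dominates_measurably_imp_sectionwise:
  assumes "sigma_finite_measure M" and "dominates_measurably M n P \<rho>"
  shows "dominates_sectionwise M n P \<rho>"
proof -
  obtain A \<gamma> where A: "A \<in> sets M" "0 < emeasure M A" and \<gamma>: "\<forall>t\<in>A. \<gamma> t > 0"
    and dom: "AE x in prodM M (Suc n). x n \<in> A \<longrightarrow> \<rho> (restrict x {..<n}) * ennreal (\<gamma> (x n)) \<le> ennreal (P x)"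
    using assms(2) unfolding dominates_measurably_def by blast
  obtain B where B: "B \<in> sets M" "B \<subseteq> A" "0 < emeasure M B"
    and sections: "\<And>t. t \<in> B \<Longrightarrow> AE y in prodM M n. (y(n := t)) n \<in> A \<longrightarrow>
        \<rho> (restrict (y(n := t)) {..<n}) * ennreal (\<gamma> ((y(n := t)) n)) \<le> ennreal (P (y(n := t)))"
    using AE_positive_subsetE[OF A AE_PiM_SucD_swap[OF assms(1) dom]] by blast
  have "AE y in prodM M n. ennreal (\<gamma> t) * \<rho> y \<le> ennreal (P (y(n := t)))" if "t \<in> B" for t
    using AE_space sections[OF that] by eventually_elim (use that B(2) in \<open>auto simp: space_PiM mult.commute\<close>)
  with B \<gamma> show ?thesis
    unfolding dominates_sectionwise_def by blast
qed

lemma AE_PiM_Suc_lower_boundI: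
  assumes "sigma_finite_measure M"
    and [measurable]: "P \<in> borel_measurable (prodM M (Suc n))" "\<rho> \<in> borel_measurable (prodM M n)"
      "A \<in> sets M" and \<gamma>: "\<gamma> \<in> borel_measurable M"
    and sections: "\<And>t. t \<in> A \<Longrightarrow> AE y in prodM M n. ennreal (\<gamma> t) * \<rho> y \<le> ennreal (P (y(n := t)))"
  shows "AE x in prodM M (Suc n). x n \<in> A \<longrightarrow> \<rho> (restrict x {..<n}) * ennreal (\<gamma> (x n)) \<le> ennreal (P x)"
proof (rule AE_PiM_SucI[OF assms(1)])
  have "(\<lambda>x. \<rho> (restrict x {..<n})) \<in> borel_measurable (prodM M (Suc n))"
    by (rule measurable_compose[OF _ assms(3)]) measurable
  moreover have "(\<lambda>x. \<gamma> (x n)) \<in> borel_measurable (prodM M (Suc n))"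
    by (rule measurable_compose[OF _ \<gamma>]) simp
  ultimately have "(\<lambda>x. \<rho> (restrict x {..<n}) * ennreal (\<gamma> (x n))) \<in> borel_measurable (prodM M (Suc n))"
    by measurable
  then have [measurable]: "Measurable.pred (prodM M (Suc n))
      (\<lambda>x. \<rho> (restrict x {..<n}) * ennreal (\<gamma> (x n)) \<le> ennreal (P x))"
    unfolding pred_def by (rule borel_measurable_le) measurable
  show "Measurable.pred (prodM M (Suc n))
      (\<lambda>x. x n \<in> A \<longrightarrow> \<rho> (restrict x {..<n}) * ennreal (\<gamma> (x n)) \<le> ennreal (P x))"
    by measurable
  have "AE y in prodM M n. (y(n := t)) n \<in> A \<longrightarrow>
      \<rho> (restrict (y(n := t)) {..<n}) * ennreal (\<gamma> ((y(n := t)) n)) \<le> ennreal (P (y(n := t)))" for t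
  proof (cases "t \<in> A")
    case True
    with AE_space sections[OF True] show ?thesis
      by eventually_elim (auto simp: space_PiM mult.commute)
  qed simp
  then show "AE t in M. AE y in prodM M n. (y(n := t)) n \<in> A \<longrightarrow>
      \<rho> (restrict (y(n := t)) {..<n}) * ennreal (\<gamma> ((y(n := t)) n)) \<le> ennreal (P (y(n := t)))"
    by simp
qed

lemma dominates_sectionwise_imp_measurably:
  assumes "sigma_finite_measure M"
    and [measurable]: "P \<in> borel_measurable (prodM M (Suc n))" "\<rho> \<in> borel_measurable (prodM M n)"
    and "dominates_sectionwise M n P \<rho>"
  shows "dominates_measurably M n P \<rho>"
proof -
  interpret pair_sigma_finite M "prodM M n"
    by (intro pair_sigma_finite.intro sigma_finite_prodM assms(1))
  obtain A where A: "A \<in> sets M" "0 < emeasure M A"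
    and ex: "\<And>t. t \<in> A \<Longrightarrow> \<exists>c>0. AE y in prodM M n. ennreal c * \<rho> y \<le> ennreal (P (y(n := t)))"
    using assms(4) unfolding dominates_sectionwise_def by blast
  have "(\<lambda>p. ennreal (P ((snd p)(n := fst p)))) \<in> borel_measurable (M \<Otimes>\<^sub>M prodM M n)"
    using measurable_compose[OF measurable_fun_upd_pair_swap assms(2)] by (simp add: split_beta')
  moreover have "(\<lambda>p. \<rho> (snd p)) \<in> borel_measurable (M \<Otimes>\<^sub>M prodM M n)"
    by measurable
  ultimately have "\<exists>\<gamma> :: 'a \<Rightarrow> real. \<gamma> \<in> borel_measurable M \<and> (\<forall>t. 0 < \<gamma> t) \<and>
      (\<forall>t\<in>A. AE y in prodM M n. ennreal (\<gamma> t) * \<rho> y \<le> ennreal (P (y(n := t))))"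
    by (rule measurable_choice_positive_factor[of "\<lambda>t y. ennreal (P (y(n := t)))" "\<lambda>t y. \<rho> y" A, OF _ _ ex])
  then obtain \<gamma> where \<gamma>: "\<gamma> \<in> borel_measurable M" "\<And>t. 0 < \<gamma> t"
    and sections: "\<And>t. t \<in> A \<Longrightarrow> AE y in prodM M n. ennreal (\<gamma> t) * \<rho> y \<le> ennreal (P (y(n := t)))"
    by blast
  with A AE_PiM_Suc_lower_boundI[OF assms(1-3) A(1) \<gamma>(1) sections] measurable_restrict_space1[OF \<gamma>(1)]
  show ?thesis
    unfolding dominates_measurably_def by blast
qed

lemma dominates_sectionwise_AE_cong:
  assumes "sigma_finite_measure M"
    and "AE x in prodM M (Suc n). P x = P' x" and "AE y in prodM M n. \<rho> y = \<rho>' y"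
    and "dominates_sectionwise M n P \<rho>"
  shows "dominates_sectionwise M n P' \<rho>'"
proof -
  obtain A where A: "A \<in> sets M" "0 < emeasure M A"
    and ex: "\<And>t. t \<in> A \<Longrightarrow> \<exists>\<gamma>>0. AE y in prodM M n. ennreal \<gamma> * \<rho> y \<le> ennreal (P (y(n := t)))"
    using assms(4) unfolding dominates_sectionwise_def by blast
  obtain B where B: "B \<in> sets M" "B \<subseteq> A" "0 < emeasure M B"
    and eq: "\<And>t. t \<in> B \<Longrightarrow> AE y in prodM M n. P (y(n := t)) = P' (y(n := t))"
    using AE_positive_subsetE[OF A AE_PiM_SucD_swap[OF assms(1,2)]] by blast
  have "\<exists>\<gamma>>0. AE y in prodM M n. ennreal \<gamma> * \<rho>' y \<le> ennreal (P' (y(n := t)))" if t: "t \<in> B" for t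
  proof -
    obtain \<gamma> where "\<gamma> > 0" and dom: "AE y in prodM M n. ennreal \<gamma> * \<rho> y \<le> ennreal (P (y(n := t)))"
      using ex t B(2) by blast
    from dom eq[OF t] assms(3)
    have "AE y in prodM M n. ennreal \<gamma> * \<rho>' y \<le> ennreal (P' (y(n := t)))"
      by eventually_elim simp
    with \<open>\<gamma> > 0\<close> show ?thesis by blast
  qed
  with B show ?thesis
    unfolding dominates_sectionwise_def by blast
qed

lemma dominates_measurably_AE_cong:
  assumes "sigma_finite_measure M"
    and "AE x in prodM M (Suc n). P x = P' x" and "AE y in prodM M n. \<rho> y = \<rho>' y"
    and "dominates_measurably M n P \<rho>"
  shows "dominates_measurably M n P' \<rho>'"
proof -
  obtain A \<gamma> where A: "A \<in> sets M" "0 < emeasure M A"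
    and \<gamma>: "\<gamma> \<in> borel_measurable (restrict_space M A)" "\<forall>t\<in>A. \<gamma> t > 0"
    and dom: "AE x in prodM M (Suc n). x n \<in> A \<longrightarrow> \<rho> (restrict x {..<n}) * ennreal (\<gamma> (x n)) \<le> ennreal (P x)"
    using assms(4) unfolding dominates_measurably_def by blast
  from dom assms(2) AE_PiM_Suc_restrict[OF assms(1,3)]
  have "AE x in prodM M (Suc n). x n \<in> A \<longrightarrow> \<rho>' (restrict x {..<n}) * ennreal (\<gamma> (x n)) \<le> ennreal (P' x)"
    by eventually_elim simp
  with A \<gamma> show ?thesis
    unfolding dominates_measurably_def by blast
qed

lemma borel_measurable_marginal:
  assumes "sigma_finite_measure M" and "P \<in> borel_measurable (prodM M (Suc n))"
  shows "marginal M (Suc n) P \<in> borel_measurable (prodM M n)"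
proof -
  have "(\<lambda>p. ennreal (P ((fst p)(n := snd p)))) \<in> borel_measurable (prodM M n \<Otimes>\<^sub>M M)"
    using measurable_compose[OF measurable_fun_upd_pair assms(2)] by (simp add: split_beta')
  from sigma_finite_measure.borel_measurable_nn_integral_fst[OF assms(1) this] show ?thesis
    by (simp add: marginal_def[abs_def])
qed

lemma AE_marginal_cong:
  assumes "sigma_finite_measure M" and "AE x in prodM M (Suc n). P x = P' x"
  shows "AE y in prodM M n. marginal M (Suc n) P y = marginal M (Suc n) P' y"
  using AE_PiM_SucD[OF assms]
  by eventually_elim (auto simp: marginal_def intro!: nn_integral_cong_AE elim!: eventually_mono)

theorem mainTheorem9:
  fixes M :: "'a measure" and N :: nat and P :: "(nat \<Rightarrow> 'a) \<Rightarrow> real"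
  assumes "complete_measure M" and "sigma_finite_measure M"
    and "emeasure M (space M) \<noteq> 0"
    and "N \<ge> 2"
    and "sym_density M N P"
  shows "(\<exists>A \<in> sets M. emeasure M A > 0 \<and>
            (\<forall>xN\<in>A. \<exists>\<gamma>::real. \<gamma> > 0 \<and>
               (AE y in powM M (N - 1).
                  ennreal (P (y(N - 1 := xN))) \<ge> ennreal \<gamma> * marginal M N P y)))
     \<longleftrightarrow>
         (\<exists>A \<in> sets M. emeasure M A > 0 \<and>
            (\<exists>\<gamma> :: 'a \<Rightarrow> real. \<gamma> \<in> borel_measurable (restrict_space M A) \<and>
               (\<forall>t\<in>A. \<gamma> t > 0) \<and>
               (AE x in powM M N. x (N - 1) \<in> A \<longrightarrow>
                  ennreal (P x) \<ge> marginal M N P (restrict x {..<N - 1}) * ennreal (\<gamma> (x (N - 1))))))"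
proof -
  note sf = assms(2)
  obtain n where N: "N = Suc n"
    using assms(4) by (cases N) auto
  have "P \<in> borel_measurable (completion (prodM M (Suc n)))"
    using assms(5) by (simp add: sym_density_def powM_def N)
  then obtain P' where P': "P' \<in> borel_measurable (prodM M (Suc n))"
    and PP': "AE x in prodM M (Suc n). P x = P' x"
    using completion_ex_borel_measurable_real by blast
  have P'P: "AE x in prodM M (Suc n). P' x = P x"
    using PP' by (simp add: eq_commute)
  let ?\<rho> = "marginal M (Suc n) P" and ?\<rho>' = "marginal M (Suc n) P'"
  have "dominates_sectionwise M n P ?\<rho> \<longleftrightarrow> dominates_measurably M n P ?\<rho>"
  proof
    assume "dominates_sectionwise M n P ?\<rho>"
    then have "dominates_sectionwise M n P' ?\<rho>'"
      by (rule dominates_sectionwise_AE_cong[OF sf PP' AE_marginal_cong[OF sf PP']])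
    then have "dominates_measurably M n P' ?\<rho>'"
      by (rule dominates_sectionwise_imp_measurably[OF sf P' borel_measurable_marginal[OF sf P']])
    then show "dominates_measurably M n P ?\<rho>"
      by (rule dominates_measurably_AE_cong[OF sf P'P AE_marginal_cong[OF sf P'P]])
  qed (rule dominates_measurably_imp_sectionwise[OF sf])
  then show ?thesis
    unfolding dominates_sectionwise_def dominates_measurably_def powM_def AE_completion_iff N diff_Suc_1 .
qed

end
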